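(* Let $C\subset\mathbb{R}^2$ be a nonempty compact set such that $U(x,y)\cap C\neq\emptyset$ for all $x,y\in C$ with $x\neq y$, where $U(x,y)=U(x,|x-y|)\cap U(y,|x-y|)$. Then $C$ is connected.
   Context: For $z\in\mathbb{R}^2$ and $r>0$, $U(z,r)$ denotes the open disc with centre $z$ and radius $r$. The set $U(x,y)$ is called the circle pair region of $x$ and $y$. *)

theory Defs
  imports "HOL-Analysis.Analysis"
begin

definition circle_pair_region :: "real^2 \<Rightarrow> real^2 \<Rightarrow> (real^2) set" where
  "circle_pair_region x y = ball x (dist x y) \<inter> ball y (dist x y)"

end

theory Submission
  imports Defs
begin

text \<open>If a compact set splits into two disjoint nonempty closed parts, take a pair \<open>x, y\<close>
  realising the distance between the parts. A point \<open>z\<close> of the set closer to both \<open>x\<close> and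
  \<open>y\<close> than they are to each other lies in one of the parts, and is then closer to the other
  part than the minimal distance allows.\<close>

lemma connected_if_closer_point_between:
  fixes C :: "'a::heine_borel set"
  assumes "compact C"
    and closer: "\<And>x y. x \<in> C \<Longrightarrow> y \<in> C \<Longrightarrow> x \<noteq> y \<Longrightarrow>
                   \<exists>z\<in>C. dist x z < dist x y \<and> dist y z < dist x y"
  shows "connected C"
proof -
  have "closed C"
    using \<open>compact C\<close> by (rule compact_imp_closed)
  show ?thesis
    unfolding connected_closed_set[OF \<open>closed C\<close>]
  proof (intro notI, elim exE conjE)
    fix A B
    assume "closed A" "closed B" "A \<noteq> {}" "B \<noteq> {}" and C_eq: "A \<union> B = C" and "A \<inter> B = {}"
    have "compact A"
      using \<open>closed A\<close> \<open>compact C\<close> C_eq compact_Int_closed[of C A] by (metis Int_absorb1 Un_upper1)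
    then obtain x y where "x \<in> A" "y \<in> B" and xy_min: "dist x y = setdist A B"
      using setdist_compact_closed \<open>closed B\<close> \<open>A \<noteq> {}\<close> \<open>B \<noteq> {}\<close> by blast
    then have "x \<noteq> y"
      using \<open>A \<inter> B = {}\<close> by blast
    then obtain z where "z \<in> C" and "dist x z < dist x y" "dist z y < dist x y"
      using closer \<open>x \<in> A\<close> \<open>y \<in> B\<close> C_eq by (metis Un_iff dist_commute)
    moreover have "setdist A B \<le> dist z y \<or> setdist A B \<le> dist x z"
      using \<open>z \<in> C\<close> C_eq \<open>x \<in> A\<close> \<open>y \<in> B\<close> setdist_le_dist[of z A y B] setdist_le_dist[of x A z B]
      by auto
    ultimately show False
      using xy_min by auto
  qed
qed

theorem mainTheorem1:
  fixes C :: "(real^2) set"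
  assumes "C \<noteq> {}" and "compact C"
    and "\<And>x y. x \<in> C \<Longrightarrow> y \<in> C \<Longrightarrow> x \<noteq> y \<Longrightarrow> circle_pair_region x y \<inter> C \<noteq> {}"
  shows "connected C"
  using \<open>compact C\<close>
proof (rule connected_if_closer_point_between)
  fix x y
  assume "x \<in> C" "y \<in> C" "x \<noteq> y"
  then obtain z where "z \<in> C" "z \<in> circle_pair_region x y"
    using assms(3) by blast
  then show "\<exists>z\<in>C. dist x z < dist x y \<and> dist y z < dist x y"
    by (auto simp: circle_pair_region_def dist_commute)
qed

end
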